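(* Let $\mathcal R$ be a DCTRS and $\langle t,\pi'\rangle$ a safe pair such that $\langle t,\pi'\rangle\leftharpoondown_{\mathcal R}^{*}\langle s,\pi\rangle$ for some term $s$ and trace $\pi$. Then the derivation $\langle t,\pi'\rangle\leftharpoondown_{\mathcal R}^{*}\langle s,\pi\rangle$ is deterministic.
   Context: Terms $\mathcal T(\mathcal F,\mathcal V)$; $\mathrm{Pos}(t)$ positions ($\epsilon$ root), $t|_p$ subterm, $t[u]_p$ replacement, $\mathrm{Var}(t_1,\dots,t_n)$ the variables occurring in the $t_i$, $\mathrm{Dom}(\sigma)=\{x\mid x\sigma\ne x\}$. A DCTRS $\mathcal R$ is a finite set of labelled conditional rules $\beta: l\to r\Leftarrow s_1\twoheadrightarrow t_1,\dots,s_n\twoheadrightarrow t_n$ ($l\notin\mathcal V$) with $\mathrm{Var}(r)\subseteq\mathrm{Var}(l,s_1,\dots,s_n,t_1,\dots,t_n)$ and $\mathrm{Var}(s_i)\subseteq\mathrm{Var}(l,t_1,\dots,t_{i-1})$ for all $i$; labels are unique and rule variables are never renamed. For such a rule let $V_\beta=(\mathrm{Var}(l)\setminus\mathrm{Var}(r,s_1,\dots,s_n,t_1,\dots,t_n))\cup\bigcup_{i=1}^n(\mathrm{Var}(t_i)\setminus\mathrm{Var}(r,s_{i+1},\dots,s_n))$. Traces: $[\,]$ is a trace, and if $\pi,\pi_1,\dots,\pi_n$ are traces, $\beta$ labels a rule with $n$ conditions, $p$ is a position and $\sigma$ a ground substitution, then $\beta(p,\sigma,\pi_1,\dots,\pi_n):\pi$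 is a trace. A trace $\pi$ is safe iff for every trace term $\beta(p,\sigma,\pi_1,\dots,\pi_n)$ in $\pi$, $\sigma$ is ground with $\mathrm{Dom}(\sigma)=V_\beta$ and $\pi_1,\dots,\pi_n$ are safe; $\langle s,\pi\rangle$ ($s$ ground) is safe iff $\pi$ is. Backward reversible rewriting (least relation on safe pairs): $\langle t,\beta(p,\sigma',\pi_1,\dots,\pi_n):\pi\rangle\leftharpoondown_{\mathcal R}\langle s,\pi\rangle$ iff this pair is safe, $\beta: l\to r\Leftarrow s_1\twoheadrightarrow t_1,\dots,s_n\twoheadrightarrow t_n\in\mathcal R$, and there is a ground $\theta$ with $\mathrm{Dom}(\theta)=\mathrm{Var}(r,s_1,\dots,s_n)\setminus\mathrm{Dom}(\sigma')$, $t|_p=r\theta$, $\langle t_i\theta\sigma',\pi_i\rangle\leftharpoondown_{\mathcal R}^{*}\langle s_i\theta\sigma',[\,]\rangle$ for all $i$, and $s=t[l\theta\sigma']_p$. A step $\langle t,\pi'\rangle\leftharpoondown_{\mathcal R}\langle s,\pi\rangle$ is deterministic if there is no pair $\langle s'',\pi''\rangle\neq\langle s,\pi\rangle$ with $\langle t,\pi'\rangle\leftharpoondown_{\mathcal R}\langle s'',\pi''\rangle$ and, moreover, the subderivations for the conditions of the applied rule are deterministic; a derivation is deterministic if each of its steps is. *)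

theory Defs
  imports Main
begin

datatype ('f,'v) "term" = Var 'v | Fun 'f "('f,'v) term list"

type_synonym pos = "nat list"

fun vars_term :: "('f,'v) term \<Rightarrow> 'v set" where
  "vars_term (Var x) = {x}"
| "vars_term (Fun f ts) = \<Union> (set (map vars_term ts))"

definition ground :: "('f,'v) term \<Rightarrow> bool" where
  "ground t \<longleftrightarrow> vars_term t = {}"

text \<open>Positions (0-based argument indices; the root is the empty list).\<close>
inductive pos_of :: "('f,'v) term \<Rightarrow> pos \<Rightarrow> bool" where
  root: "pos_of t []"
| arg: "i < length ts \<Longrightarrow> pos_of (ts ! i) p \<Longrightarrow> pos_of (Fun f ts) (i # p)"

definition poss :: "('f,'v) term \<Rightarrow> pos set" where
  "poss t = {p. pos_of t p}"

fun subt_at :: "('f,'v) term \<Rightarrow> pos \<Rightarrow> ('f,'v) term" where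
  "subt_at t [] = t"
| "subt_at (Fun f ts) (i # p) = subt_at (ts ! i) p"
| "subt_at (Var x) (i # p) = undefined"

fun replace_at :: "('f,'v) term \<Rightarrow> pos \<Rightarrow> ('f,'v) term \<Rightarrow> ('f,'v) term" where
  "replace_at t [] u = u"
| "replace_at (Fun f ts) (i # p) u = Fun f (ts[i := replace_at (ts ! i) p u])"
| "replace_at (Var x) (i # p) u = undefined"

type_synonym ('f,'v) subst = "'v \<Rightarrow> ('f,'v) term"

fun subst_apply :: "('f,'v) term \<Rightarrow> ('f,'v) subst \<Rightarrow> ('f,'v) term" (infixl "\<cdot>" 67) where
  "Var x \<cdot> \<sigma> = \<sigma> x"
| "Fun f ts \<cdot> \<sigma> = Fun f (map (\<lambda>t. t \<cdot> \<sigma>) ts)"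

definition sdom :: "('f,'v) subst \<Rightarrow> 'v set" where
  "sdom \<sigma> = {x. \<sigma> x \<noteq> Var x}"

definition ground_subst :: "('f,'v) subst \<Rightarrow> bool" where
  "ground_subst \<sigma> \<longleftrightarrow> (\<forall>x \<in> sdom \<sigma>. ground (\<sigma> x))"

text \<open>A rule  label: lhs \<rightarrow> rhs \<Leftarrow> s1 \<twoheadrightarrow> t1, ..., sn \<twoheadrightarrow> tn ; conditions are pairs (si, ti).\<close>
datatype ('l,'f,'v) crule =
  CRule (label: 'l) (lhs: "('f,'v) term") (rhs: "('f,'v) term") (conds: "(('f,'v) term \<times> ('f,'v) term) list")

definition cond_vars_from :: "('l,'f,'v) crule \<Rightarrow> nat \<Rightarrow> 'v set" where
  "cond_vars_from \<rho> k = (\<Union>j \<in> {k..<length (conds \<rho>)}. vars_term (fst (conds \<rho> ! j)))"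

definition all_cond_vars :: "('l,'f,'v) crule \<Rightarrow> 'v set" where
  "all_cond_vars \<rho> = (\<Union>j < length (conds \<rho>). vars_term (fst (conds \<rho> ! j)) \<union> vars_term (snd (conds \<rho> ! j)))"

definition dctrs :: "('l,'f,'v) crule set \<Rightarrow> bool" where
  "dctrs R \<longleftrightarrow> finite R
     \<and> (\<forall>\<rho> \<in> R. \<forall>\<rho>' \<in> R. label \<rho> = label \<rho>' \<longrightarrow> \<rho> = \<rho>')
     \<and> (\<forall>\<rho> \<in> R. (\<forall>x. lhs \<rho> \<noteq> Var x)
          \<and> vars_term (rhs \<rho>) \<subseteq> vars_term (lhs \<rho>) \<union> all_cond_vars \<rho>
          \<and> (\<forall>i < length (conds \<rho>). vars_term (fst (conds \<rho> ! i)) \<subseteq>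
               vars_term (lhs \<rho>) \<union> (\<Union>j < i. vars_term (snd (conds \<rho> ! j)))))"

definition Vbeta :: "('l,'f,'v) crule \<Rightarrow> 'v set" where
  "Vbeta \<rho> = (vars_term (lhs \<rho>) - (vars_term (rhs \<rho>) \<union> all_cond_vars \<rho>))
     \<union> (\<Union>i < length (conds \<rho>). vars_term (snd (conds \<rho> ! i)) - (vars_term (rhs \<rho>) \<union> cond_vars_from \<rho> (Suc i)))"

datatype ('l,'f,'v) trace_term =
  TT 'l pos "('f,'v) subst" "('l,'f,'v) trace_term list list"

type_synonym ('l,'f,'v) trace = "('l,'f,'v) trace_term list"

inductive safe_tt :: "('l,'f,'v) crule set \<Rightarrow> ('l,'f,'v) trace_term \<Rightarrow> bool" for R where
  "\<rho> \<in> R \<Longrightarrow> label \<rho> = \<beta> \<Longrightarrow> length \<pi>s = length (conds \<rho>) \<Longrightarrow>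
   ground_subst \<sigma> \<Longrightarrow> sdom \<sigma> = Vbeta \<rho> \<Longrightarrow>
   (\<forall>\<pi> \<in> set \<pi>s. \<forall>\<tau> \<in> set \<pi>. safe_tt R \<tau>) \<Longrightarrow>
   safe_tt R (TT \<beta> p \<sigma> \<pi>s)"

definition safe_trace :: "('l,'f,'v) crule set \<Rightarrow> ('l,'f,'v) trace \<Rightarrow> bool" where
  "safe_trace R \<pi> \<longleftrightarrow> (\<forall>\<tau> \<in> set \<pi>. safe_tt R \<tau>)"

definition safe_pair :: "('l,'f,'v) crule set \<Rightarrow> ('f,'v) term \<times> ('l,'f,'v) trace \<Rightarrow> bool" where
  "safe_pair R c \<longleftrightarrow> ground (fst c) \<and> safe_trace R (snd c)"

text \<open>bstep R (t, \<pi>') (s, \<pi>) means  <t,\<pi>'> \<leftharpoondown>_R <s,\<pi>>.\<close>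
inductive bstep :: "('l,'f,'v) crule set \<Rightarrow> ('f,'v) term \<times> ('l,'f,'v) trace \<Rightarrow> ('f,'v) term \<times> ('l,'f,'v) trace \<Rightarrow> bool"
  for R where
  "safe_pair R (t, TT \<beta> p \<sigma>' \<pi>s # \<pi>) \<Longrightarrow> safe_pair R (s, \<pi>) \<Longrightarrow>
   \<rho> \<in> R \<Longrightarrow> label \<rho> = \<beta> \<Longrightarrow> length \<pi>s = length (conds \<rho>) \<Longrightarrow>
   ground_subst \<theta> \<Longrightarrow> sdom \<theta> = (vars_term (rhs \<rho>) \<union> cond_vars_from \<rho> 0) - sdom \<sigma>' \<Longrightarrow>
   p \<in> poss t \<Longrightarrow> subt_at t p = rhs \<rho> \<cdot> \<theta> \<Longrightarrow>
   (\<forall>i < length (conds \<rho>).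
      (bstep R)\<^sup>*\<^sup>* (snd (conds \<rho> ! i) \<cdot> \<theta> \<cdot> \<sigma>', \<pi>s ! i) (fst (conds \<rho> ! i) \<cdot> \<theta> \<cdot> \<sigma>', [])) \<Longrightarrow>
   s = replace_at t p (lhs \<rho> \<cdot> \<theta> \<cdot> \<sigma>') \<Longrightarrow>
   bstep R (t, TT \<beta> p \<sigma>' \<pi>s # \<pi>) (s, \<pi>)"

definition is_bderiv :: "('l,'f,'v) crule set \<Rightarrow> (('f,'v) term \<times> ('l,'f,'v) trace) list
    \<Rightarrow> ('f,'v) term \<times> ('l,'f,'v) trace \<Rightarrow> ('f,'v) term \<times> ('l,'f,'v) trace \<Rightarrow> bool" where
  "is_bderiv R cs a b \<longleftrightarrow> cs \<noteq> [] \<and> hd cs = a \<and> last cs = b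
     \<and> (\<forall>j < length cs - 1. bstep R (cs ! j) (cs ! Suc j))"

text \<open>A step is deterministic if it is the only backward step from its source and,
  for every way the step is justified (matching substitution \<theta>), every subderivation
  for the conditions of the applied rule consists of deterministic steps.\<close>
inductive det_step :: "('l,'f,'v) crule set \<Rightarrow> ('f,'v) term \<times> ('l,'f,'v) trace \<Rightarrow> ('f,'v) term \<times> ('l,'f,'v) trace \<Rightarrow> bool"
  for R where
  "bstep R (t, \<pi>') (s, \<pi>) \<Longrightarrow>
   (\<forall>c. bstep R (t, \<pi>') c \<longrightarrow> c = (s, \<pi>)) \<Longrightarrow>
   (\<forall>\<beta> p \<sigma>' \<pi>s \<rho> \<theta>. \<pi>' = TT \<beta> p \<sigma>' \<pi>s # \<pi> \<longrightarrow> \<rho> \<in> R \<longrightarrow> label \<rho> = \<beta> \<longrightarrow>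
      length \<pi>s = length (conds \<rho>) \<longrightarrow>
      ground_subst \<theta> \<longrightarrow> sdom \<theta> = (vars_term (rhs \<rho>) \<union> cond_vars_from \<rho> 0) - sdom \<sigma>' \<longrightarrow>
      p \<in> poss t \<longrightarrow> subt_at t p = rhs \<rho> \<cdot> \<theta> \<longrightarrow>
      (\<forall>i < length (conds \<rho>).
        (bstep R)\<^sup>*\<^sup>* (snd (conds \<rho> ! i) \<cdot> \<theta> \<cdot> \<sigma>', \<pi>s ! i) (fst (conds \<rho> ! i) \<cdot> \<theta> \<cdot> \<sigma>', [])) \<longrightarrow>
      s = replace_at t p (lhs \<rho> \<cdot> \<theta> \<cdot> \<sigma>') \<longrightarrow>
      (\<forall>i < length (conds \<rho>). \<forall>cs.
         is_bderiv R cs (snd (conds \<rho> ! i) \<cdot> \<theta> \<cdot> \<sigma>', \<pi>s ! i) (fst (conds \<rho> ! i) \<cdot> \<theta> \<cdot> \<sigma>', []) \<longrightarrow>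
         (\<forall>j < length cs - 1. det_step R (cs ! j) (cs ! Suc j)))) \<Longrightarrow>
   det_step R (t, \<pi>') (s, \<pi>)"

definition det_deriv :: "('l,'f,'v) crule set \<Rightarrow> (('f,'v) term \<times> ('l,'f,'v) trace) list \<Rightarrow> bool" where
  "det_deriv R cs \<longleftrightarrow> (\<forall>j < length cs - 1. det_step R (cs ! j) (cs ! Suc j))"

end

theory Submission
  imports Defs
begin

text \<open>A backward step is driven by the trace term \<open>\<beta>(p,\<sigma>',\<pi>\<^sub>1,\<dots>,\<pi>\<^sub>n)\<close>: the label fixes
  the rule, the position fixes the redex, and \<open>r\<theta> = t|\<^sub>p\<close> fixes \<open>\<theta>\<close> on the variables of \<open>r\<close>.
  Going through the conditions from the last to the first, every variable of \<open>t\<^sub>i\<close> lies in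
  \<open>V\<^sub>\<beta>\<close> (bound by \<open>\<sigma>'\<close>), in \<open>r\<close>, or in some later \<open>s\<^sub>j\<close>, so \<open>t\<^sub>i\<theta>\<sigma>'\<close> is already determined;
  by induction on trace terms the backward derivation from it along \<open>\<pi>\<^sub>i\<close> is unique, hence so
  is \<open>s\<^sub>i\<theta>\<sigma>'\<close>, and since \<open>\<theta>\<close> is ground and avoids \<open>Dom(\<sigma>')\<close> this determines \<open>\<theta>\<close> on \<open>s\<^sub>i\<close>.
  Thus every backward step is the only one from its source, and the same induction on
  trace terms shows that all steps of the subderivations are deterministic too.\<close>

lemma subst_apply_subst_apply: "t \<cdot> \<theta> \<cdot> \<sigma> = t \<cdot> (\<lambda>x. \<theta> x \<cdot> \<sigma>)"
  by (induct t) auto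

lemma subst_apply_eq_iff: "t \<cdot> \<sigma> = t \<cdot> \<tau> \<longleftrightarrow> (\<forall>x \<in> vars_term t. \<sigma> x = \<tau> x)"
  by (induct t) (auto simp: map_eq_conv)

lemma ground_subst_apply_id: "ground t \<Longrightarrow> t \<cdot> \<sigma> = t"
  by (induct t) (auto simp: ground_def intro: map_idI)

lemma ground_subst_eq_after_subst:
  assumes "sdom \<theta>\<^sub>1 = sdom \<theta>\<^sub>2" "ground_subst \<theta>\<^sub>1" "ground_subst \<theta>\<^sub>2" "\<theta>\<^sub>1 x \<cdot> \<sigma> = \<theta>\<^sub>2 x \<cdot> \<sigma>"
  shows "\<theta>\<^sub>1 x = \<theta>\<^sub>2 x"
proof (cases "x \<in> sdom \<theta>\<^sub>1")
  case True
  with assms(1-3) have "ground (\<theta>\<^sub>1 x)" "ground (\<theta>\<^sub>2 x)" by (auto simp: ground_subst_def)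
  with assms(4) show ?thesis by (simp add: ground_subst_apply_id)
next
  case False
  with assms(1) have "x \<notin> sdom \<theta>\<^sub>2" by simp
  with False show ?thesis by (simp add: sdom_def)
qed

lemma cond_vars_from_Suc:
  "k < length (conds \<rho>) \<Longrightarrow>
    cond_vars_from \<rho> k = vars_term (fst (conds \<rho> ! k)) \<union> cond_vars_from \<rho> (Suc k)"
proof -
  assume "k < length (conds \<rho>)"
  then have "{k..<length (conds \<rho>)} = insert k {Suc k..<length (conds \<rho>)}" by auto
  then show ?thesis unfolding cond_vars_from_def by simp
qed

lemma cond_vars_from_length: "cond_vars_from \<rho> (length (conds \<rho>)) = {}"
  unfolding cond_vars_from_def by auto

lemma vars_cond_target_subset:
  "k < length (conds \<rho>) \<Longrightarrow>
    vars_term (snd (conds \<rho> ! k)) \<subseteq> Vbeta \<rho> \<union> vars_term (rhs \<rho>) \<union> cond_vars_from \<rho> (Suc k)"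
  unfolding Vbeta_def by blast

lemma backward_matcher_unique:
  assumes dom\<^sub>1: "sdom \<theta>\<^sub>1 = (vars_term (rhs \<rho>) \<union> cond_vars_from \<rho> 0) - sdom \<sigma>"
    and dom\<^sub>2: "sdom \<theta>\<^sub>2 = (vars_term (rhs \<rho>) \<union> cond_vars_from \<rho> 0) - sdom \<sigma>"
    and ground\<^sub>1: "ground_subst \<theta>\<^sub>1" and ground\<^sub>2: "ground_subst \<theta>\<^sub>2"
    and dom_\<sigma>: "sdom \<sigma> = Vbeta \<rho>"
    and rhs_eq: "rhs \<rho> \<cdot> \<theta>\<^sub>1 = rhs \<rho> \<cdot> \<theta>\<^sub>2"
    and conds_eq: "\<And>i. i < length (conds \<rho>) \<Longrightarrow>
        snd (conds \<rho> ! i) \<cdot> \<theta>\<^sub>1 \<cdot> \<sigma> = snd (conds \<rho> ! i) \<cdot> \<theta>\<^sub>2 \<cdot> \<sigma> \<Longrightarrow>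
        fst (conds \<rho> ! i) \<cdot> \<theta>\<^sub>1 \<cdot> \<sigma> = fst (conds \<rho> ! i) \<cdot> \<theta>\<^sub>2 \<cdot> \<sigma>"
  shows "\<theta>\<^sub>1 = \<theta>\<^sub>2"
proof -
  have same_dom: "sdom \<theta>\<^sub>1 = sdom \<theta>\<^sub>2" using dom\<^sub>1 dom\<^sub>2 by simp
  have outside_dom: "\<theta>\<^sub>1 x = \<theta>\<^sub>2 x" if "x \<notin> sdom \<theta>\<^sub>1" for x
  proof -
    have "x \<notin> sdom \<theta>\<^sub>2" using that same_dom by simp
    with that show ?thesis by (simp add: sdom_def)
  qed
  have "\<forall>x \<in> vars_term (rhs \<rho>) \<union> cond_vars_from \<rho> k. \<theta>\<^sub>1 x = \<theta>\<^sub>2 x"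
    if "k \<le> length (conds \<rho>)" for k
    using that
  proof (induction k rule: inc_induct)
    case base
    then show ?case using rhs_eq by (simp add: subst_apply_eq_iff cond_vars_from_length)
  next
    case (step k)
    have "\<theta>\<^sub>1 x = \<theta>\<^sub>2 x" if "x \<in> vars_term (snd (conds \<rho> ! k))" for x
      using that vars_cond_target_subset[OF step.hyps(2)] dom_\<sigma> dom\<^sub>1 step.IH outside_dom
      by blast
    then have "snd (conds \<rho> ! k) \<cdot> \<theta>\<^sub>1 \<cdot> \<sigma> = snd (conds \<rho> ! k) \<cdot> \<theta>\<^sub>2 \<cdot> \<sigma>"
      by (simp add: subst_apply_subst_apply subst_apply_eq_iff)
    then have "fst (conds \<rho> ! k) \<cdot> \<theta>\<^sub>1 \<cdot> \<sigma> = fst (conds \<rho> ! k) \<cdot> \<theta>\<^sub>2 \<cdot> \<sigma>"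
      using conds_eq step.hyps(2) by blast
    then have "\<forall>x \<in> vars_term (fst (conds \<rho> ! k)). \<theta>\<^sub>1 x \<cdot> \<sigma> = \<theta>\<^sub>2 x \<cdot> \<sigma>"
      by (simp add: subst_apply_subst_apply subst_apply_eq_iff)
    then have "\<theta>\<^sub>1 x = \<theta>\<^sub>2 x" if "x \<in> vars_term (fst (conds \<rho> ! k))" for x
      using that ground_subst_eq_after_subst[OF same_dom ground\<^sub>1 ground\<^sub>2] by blast
    then show ?case using step.IH cond_vars_from_Suc[OF step.hyps(2)] by auto
  qed
  from this[of 0] have "\<theta>\<^sub>1 x = \<theta>\<^sub>2 x" for x
    using dom\<^sub>1 outside_dom by (cases "x \<in> sdom \<theta>\<^sub>1") auto
  then show ?thesis by blast
qed

lemma bstep_pops_trace: "bstep R (t, \<pi>') c \<Longrightarrow> \<pi>' = hd \<pi>' # snd c"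
  by (erule bstep.cases) auto

lemma bstep_TT_Cons_elim:
  assumes "bstep R (t, TT \<beta> p \<sigma> \<pi>s # \<pi>) c"
  obtains \<rho> \<theta> where "c = (replace_at t p (lhs \<rho> \<cdot> \<theta> \<cdot> \<sigma>), \<pi>)"
    "safe_tt R (TT \<beta> p \<sigma> \<pi>s)" "\<rho> \<in> R" "label \<rho> = \<beta>" "length \<pi>s = length (conds \<rho>)"
    "ground_subst \<theta>" "sdom \<theta> = (vars_term (rhs \<rho>) \<union> cond_vars_from \<rho> 0) - sdom \<sigma>"
    "subt_at t p = rhs \<rho> \<cdot> \<theta>"
    "\<And>i. i < length (conds \<rho>) \<Longrightarrow>
      (bstep R)\<^sup>*\<^sup>* (snd (conds \<rho> ! i) \<cdot> \<theta> \<cdot> \<sigma>, \<pi>s ! i) (fst (conds \<rho> ! i) \<cdot> \<theta> \<cdot> \<sigma>, [])"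
  using assms by (cases rule: bstep.cases) (auto simp: safe_pair_def safe_trace_def)

lemma safe_tt_dom:
  assumes "inj_on label R" "safe_tt R (TT \<beta> p \<sigma> \<pi>s)" "\<rho> \<in> R" "label \<rho> = \<beta>"
  shows "sdom \<sigma> = Vbeta \<rho>"
  using assms(2) by (cases rule: safe_tt.cases) (use assms in \<open>auto dest: inj_onD\<close>)

lemma bsteps_to_empty_trace_unique:
  assumes "\<And>\<tau> t \<pi> c\<^sub>1 c\<^sub>2. \<tau> \<in> set \<pi>\<^sub>0 \<Longrightarrow> bstep R (t, \<tau> # \<pi>) c\<^sub>1 \<Longrightarrow> bstep R (t, \<tau> # \<pi>) c\<^sub>2 \<Longrightarrow> c\<^sub>1 = c\<^sub>2"
    and "(bstep R)\<^sup>*\<^sup>* (u, \<pi>\<^sub>0) (a, [])" "(bstep R)\<^sup>*\<^sup>* (u, \<pi>\<^sub>0) (b, [])"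
  shows "a = b"
  using assms
proof (induction \<pi>\<^sub>0 arbitrary: u)
  case Nil
  have "c = (u, [])" if "(bstep R)\<^sup>*\<^sup>* (u, []) c" for c
    using that by (cases rule: converse_rtranclpE) (auto dest: bstep_pops_trace)
  with Nil.prems show ?case by blast
next
  case (Cons \<tau> \<pi>\<^sub>0)
  from Cons.prems(2) obtain c\<^sub>1 where c\<^sub>1: "bstep R (u, \<tau> # \<pi>\<^sub>0) c\<^sub>1" "(bstep R)\<^sup>*\<^sup>* c\<^sub>1 (a, [])"
    by (cases rule: converse_rtranclpE) auto
  from Cons.prems(3) obtain c\<^sub>2 where c\<^sub>2: "bstep R (u, \<tau> # \<pi>\<^sub>0) c\<^sub>2" "(bstep R)\<^sup>*\<^sup>* c\<^sub>2 (b, [])"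
    by (cases rule: converse_rtranclpE) auto
  have "c\<^sub>1 = c\<^sub>2" using Cons.prems(1)[OF list.set_intros(1) c\<^sub>1(1) c\<^sub>2(1)] .
  moreover have "snd c\<^sub>1 = \<pi>\<^sub>0" using bstep_pops_trace[OF c\<^sub>1(1)] by simp
  ultimately show ?case
    using Cons.IH[of "fst c\<^sub>1"] Cons.prems(1) c\<^sub>1(2) c\<^sub>2(2) by (metis list.set_intros(2) prod.collapse)
qed

lemma bstep_unique:
  assumes "inj_on label R"
  shows "bstep R (t, \<tau> # \<pi>) c\<^sub>1 \<Longrightarrow> bstep R (t, \<tau> # \<pi>) c\<^sub>2 \<Longrightarrow> c\<^sub>1 = c\<^sub>2"
proof (induction \<tau> arbitrary: t \<pi> c\<^sub>1 c\<^sub>2)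
  case (TT \<beta> p \<sigma> \<pi>s)
  from TT.prems(1) obtain \<rho> \<theta>\<^sub>1 where step\<^sub>1:
    "c\<^sub>1 = (replace_at t p (lhs \<rho> \<cdot> \<theta>\<^sub>1 \<cdot> \<sigma>), \<pi>)"
    "safe_tt R (TT \<beta> p \<sigma> \<pi>s)" "\<rho> \<in> R" "label \<rho> = \<beta>" "length \<pi>s = length (conds \<rho>)"
    "ground_subst \<theta>\<^sub>1" "sdom \<theta>\<^sub>1 = (vars_term (rhs \<rho>) \<union> cond_vars_from \<rho> 0) - sdom \<sigma>"
    "subt_at t p = rhs \<rho> \<cdot> \<theta>\<^sub>1"
    "\<And>i. i < length (conds \<rho>) \<Longrightarrow>
      (bstep R)\<^sup>*\<^sup>* (snd (conds \<rho> ! i) \<cdot> \<theta>\<^sub>1 \<cdot> \<sigma>, \<pi>s ! i) (fst (conds \<rho> ! i) \<cdot> \<theta>\<^sub>1 \<cdot> \<sigma>, [])"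
    by (elim bstep_TT_Cons_elim) blast
  from TT.prems(2) obtain \<rho>\<^sub>2 \<theta>\<^sub>2 where step\<^sub>2:
    "c\<^sub>2 = (replace_at t p (lhs \<rho>\<^sub>2 \<cdot> \<theta>\<^sub>2 \<cdot> \<sigma>), \<pi>)" "\<rho>\<^sub>2 \<in> R" "label \<rho>\<^sub>2 = \<beta>"
    "ground_subst \<theta>\<^sub>2" "sdom \<theta>\<^sub>2 = (vars_term (rhs \<rho>\<^sub>2) \<union> cond_vars_from \<rho>\<^sub>2 0) - sdom \<sigma>"
    "subt_at t p = rhs \<rho>\<^sub>2 \<cdot> \<theta>\<^sub>2"
    "\<And>i. i < length (conds \<rho>\<^sub>2) \<Longrightarrow>
      (bstep R)\<^sup>*\<^sup>* (snd (conds \<rho>\<^sub>2 ! i) \<cdot> \<theta>\<^sub>2 \<cdot> \<sigma>, \<pi>s ! i) (fst (conds \<rho>\<^sub>2 ! i) \<cdot> \<theta>\<^sub>2 \<cdot> \<sigma>, [])"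
    by (elim bstep_TT_Cons_elim) blast
  have same_rule: "\<rho>\<^sub>2 = \<rho>" using assms step\<^sub>1(3,4) step\<^sub>2(2,3) by (auto dest: inj_onD)
  have "\<theta>\<^sub>1 = \<theta>\<^sub>2"
  proof (rule backward_matcher_unique)
    show "sdom \<sigma> = Vbeta \<rho>" using safe_tt_dom[OF assms step\<^sub>1(2-4)] .
    fix i assume i: "i < length (conds \<rho>)"
      and conds_target_eq: "snd (conds \<rho> ! i) \<cdot> \<theta>\<^sub>1 \<cdot> \<sigma> = snd (conds \<rho> ! i) \<cdot> \<theta>\<^sub>2 \<cdot> \<sigma>"
    have "\<pi>s ! i \<in> set \<pi>s" using i step\<^sub>1(5) by simp
    then have "c\<^sub>1' = c\<^sub>2'"
      if "\<tau> \<in> set (\<pi>s ! i)" "bstep R (t', \<tau> # \<pi>') c\<^sub>1'" "bstep R (t', \<tau> # \<pi>') c\<^sub>2'"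
      for \<tau> t' \<pi>' c\<^sub>1' c\<^sub>2'
      using that TT.IH by blast
    from bsteps_to_empty_trace_unique[OF this step\<^sub>1(9)[OF i]] step\<^sub>2(7) i conds_target_eq same_rule
    show "fst (conds \<rho> ! i) \<cdot> \<theta>\<^sub>1 \<cdot> \<sigma> = fst (conds \<rho> ! i) \<cdot> \<theta>\<^sub>2 \<cdot> \<sigma>"
      by simp
  qed (use step\<^sub>1 step\<^sub>2 same_rule in auto)
  then show "c\<^sub>1 = c\<^sub>2" using step\<^sub>1(1) step\<^sub>2(1) same_rule by simp
qed

lemma bderiv_trace:
  assumes "is_bderiv R cs (a, \<pi>\<^sub>0) b" "j < length cs"
  shows "snd (cs ! j) = drop j \<pi>\<^sub>0"
  using assms(2)
proof (induction j)
  case 0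
  then show ?case using assms(1) by (cases cs) (auto simp: is_bderiv_def)
next
  case (Suc j)
  then have "bstep R (cs ! j) (cs ! Suc j)" using assms(1) by (auto simp: is_bderiv_def)
  then have "snd (cs ! j) = hd (snd (cs ! j)) # snd (cs ! Suc j)"
    by (metis bstep_pops_trace prod.collapse)
  with Suc show ?case
    by (metis Suc_lessD drop_Suc list.sel(3) tl_drop)
qed

lemma bstep_imp_det_step:
  assumes "inj_on label R"
  shows "bstep R (t, \<tau> # \<pi>) c \<Longrightarrow> det_step R (t, \<tau> # \<pi>) c"
proof (induction \<tau> arbitrary: t \<pi> c)
  case (TT \<beta> p \<sigma> \<pi>s)
  obtain s \<pi>\<^sub>s where c: "c = (s, \<pi>\<^sub>s)" by fastforce
  have subderivs_det: "det_step R (cs ! j) (cs ! Suc j)"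
    if i: "i < length \<pi>s" and cs: "is_bderiv R cs (u, \<pi>s ! i) v" and j: "j < length cs - 1"
    for i cs u v j
  proof -
    have step: "bstep R (cs ! j) (cs ! Suc j)" using cs j by (auto simp: is_bderiv_def)
    let ?\<tau> = "hd (snd (cs ! j))"
    have trace: "snd (cs ! j) = ?\<tau> # snd (cs ! Suc j)"
      using bstep_pops_trace[of R "fst (cs ! j)"] step by simp
    moreover have "snd (cs ! j) = drop j (\<pi>s ! i)" using bderiv_trace[OF cs] j by simp
    ultimately have "?\<tau> \<in> set (\<pi>s ! i)" by (metis in_set_dropD list.set_intros(1))
    with i trace step show ?thesis using TT.IH[of "\<pi>s ! i" ?\<tau>] by (metis nth_mem prod.collapse)
  qed
  show ?case unfolding c
  proof (rule det_step.intros)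
    show "bstep R (t, TT \<beta> p \<sigma> \<pi>s # \<pi>) (s, \<pi>\<^sub>s)" using TT.prems c by simp
    then show "\<forall>c'. bstep R (t, TT \<beta> p \<sigma> \<pi>s # \<pi>) c' \<longrightarrow> c' = (s, \<pi>\<^sub>s)"
      using bstep_unique[OF assms] by blast
  qed (use subderivs_det in auto)
qed

theorem mainTheorem11:
  fixes R :: "('l,'f,'v) crule set"
  assumes "dctrs R"
    and "safe_pair R (t, \<pi>')"
    and "is_bderiv R cs (t, \<pi>') (s, \<pi>)"
  shows "det_deriv R cs"
  unfolding det_deriv_def
proof (intro allI impI)
  fix j assume "j < length cs - 1"
  then have step: "bstep R (cs ! j) (cs ! Suc j)" using assms(3) by (auto simp: is_bderiv_def)
  have "inj_on label R" using assms(1) by (auto simp: dctrs_def inj_on_def)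
  from bstep_imp_det_step[OF this] bstep_pops_trace[of R "fst (cs ! j)"] step
  show "det_step R (cs ! j) (cs ! Suc j)" by (metis prod.collapse)
qed

end
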